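(* Let $n\geq 2$ and let $X$ be any finite subset of $\mathbb{R}^n$. Then there is a polynomial vector field $g:\mathbb{R}^n\rightarrow \mathbb{R}^n$ such that every point of $X$ is an asymptotically stable equilibrium of $\dot x = g(x)$, and $g$ has no equilibria (zeros) outside $X$. *)

theory Defs
  imports "HOL-Analysis.Analysis"
begin

inductive poly_fun :: "(real ^ 'n \<Rightarrow> real) \<Rightarrow> bool" where
  const: "poly_fun (\<lambda>x. c)"
| coord: "poly_fun (\<lambda>x. x $ i)"
| add: "poly_fun f \<Longrightarrow> poly_fun g \<Longrightarrow> poly_fun (\<lambda>x. f x + g x)"
| mult: "poly_fun f \<Longrightarrow> poly_fun g \<Longrightarrow> poly_fun (\<lambda>x. f x * g x)"

definition poly_vector_field :: "(real ^ 'n \<Rightarrow> real ^ 'n) \<Rightarrow> bool" where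
  "poly_vector_field g \<longleftrightarrow> (\<forall>i. poly_fun (\<lambda>x. g x $ i))"

definition ode_solution_on :: "(real ^ 'n \<Rightarrow> real ^ 'n) \<Rightarrow> (real \<Rightarrow> real ^ 'n) \<Rightarrow> real set \<Rightarrow> bool" where
  "ode_solution_on g x S \<longleftrightarrow> (\<forall>t\<in>S. (x has_vector_derivative g (x t)) (at t within S))"

definition lyapunov_stable :: "(real ^ 'n \<Rightarrow> real ^ 'n) \<Rightarrow> real ^ 'n \<Rightarrow> bool" where
  "lyapunov_stable g p \<longleftrightarrow>
     (\<forall>\<epsilon>>0. \<exists>\<delta>>0. \<forall>x0. dist x0 p < \<delta> \<longrightarrow>
        (\<exists>x. x 0 = x0 \<and> ode_solution_on g x {0..}) \<and>
        (\<forall>x T. 0 \<le> T \<longrightarrow> x 0 = x0 \<longrightarrow> ode_solution_on g x {0..T} \<longrightarrow>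
              (\<forall>t\<in>{0..T}. dist (x t) p < \<epsilon>)))"

definition attractive :: "(real ^ 'n \<Rightarrow> real ^ 'n) \<Rightarrow> real ^ 'n \<Rightarrow> bool" where
  "attractive g p \<longleftrightarrow>
     (\<exists>\<eta>>0. \<forall>x. dist (x 0) p < \<eta> \<longrightarrow> ode_solution_on g x {0..} \<longrightarrow>
        (x \<longlongrightarrow> p) at_top)"

definition asymptotically_stable_equilibrium :: "(real ^ 'n \<Rightarrow> real ^ 'n) \<Rightarrow> real ^ 'n \<Rightarrow> bool" where
  "asymptotically_stable_equilibrium g p \<longleftrightarrow> g p = 0 \<and> lyapunov_stable g p \<and> attractive g p"

end

theory Submission
  imports Defs "HOL-Computational_Algebra.Polynomial"
begin

text \<open>Choose a unit vector c whose heights s y = c \<bullet> y separate the points of X, a unit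
  vector e orthogonal to c, and the curve through X parametrised by height (Lagrange
  interpolation). Writing y = s y c + curve (s y) + offset y, the coordinate
  zeta = s + i (e \<bullet> offset) sends each p in X to the real number s p. The field g makes zeta
  move by zeta' = F = (\<Prod>p\<in>X. zeta - s p) w(s), with w nowhere zero (so g vanishes exactly
  on X) and normalised so that F = (zeta - s p) h with h(p) = -1 at every node p, while the
  component of the offset orthogonal to e decays like exp (- t). Hence (s - s p)^2 + |offset|^2
  is a strict Lyapunov function near each p. Solutions near p exist for all time because the
  field truncated outside a ball is globally Lipschitz, and they never leave the ball.\<close>

lemma poly_fun_cmult: "poly_fun f \<Longrightarrow> poly_fun (\<lambda>x. c * f x)"
  by (rule poly_fun.mult[OF poly_fun.const])

lemma poly_fun_minus: "poly_fun f \<Longrightarrow> poly_fun (\<lambda>x. - f x)"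
  using poly_fun_cmult[of f "-1"] by simp

lemma poly_fun_diff: "poly_fun f \<Longrightarrow> poly_fun g \<Longrightarrow> poly_fun (\<lambda>x. f x - g x)"
  using poly_fun.add[OF _ poly_fun_minus] by simp

lemma poly_fun_sum:
  "finite A \<Longrightarrow> (\<And>a. a \<in> A \<Longrightarrow> poly_fun (f a)) \<Longrightarrow> poly_fun (\<lambda>x. \<Sum>a\<in>A. f a x)"
  by (induction A rule: finite_induct) (auto intro: poly_fun.intros)

lemma poly_fun_prod:
  "finite A \<Longrightarrow> (\<And>a. a \<in> A \<Longrightarrow> poly_fun (f a)) \<Longrightarrow> poly_fun (\<lambda>x. \<Prod>a\<in>A. f a x)"
  by (induction A rule: finite_induct) (auto intro: poly_fun.intros)

lemma poly_fun_poly_comp: "poly_fun f \<Longrightarrow> poly_fun (\<lambda>x. poly q (f x))"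
  by (induction q rule: pCons_induct) (auto intro: poly_fun.intros)

lemma poly_fun_inner_left: "poly_fun (\<lambda>x. c \<bullet> x)"
  unfolding inner_vec_def by (auto intro!: poly_fun_sum poly_fun_cmult poly_fun.coord)

lemma poly_fun_inner_right: "(\<And>i. poly_fun (\<lambda>x. f x $ i)) \<Longrightarrow> poly_fun (\<lambda>x. f x \<bullet> c)"
  unfolding inner_vec_def by (auto intro!: poly_fun_sum poly_fun.mult poly_fun.const)

lemma poly_fun_continuous_on: "poly_fun f \<Longrightarrow> continuous_on S f"
  by (induction f rule: poly_fun.induct) (auto intro!: continuous_intros)

definition complex_poly_fun :: "(real ^ 'n \<Rightarrow> complex) \<Rightarrow> bool" where
  "complex_poly_fun F \<longleftrightarrow> poly_fun (\<lambda>x. Re (F x)) \<and> poly_fun (\<lambda>x. Im (F x))"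

lemma complex_poly_fun_const: "complex_poly_fun (\<lambda>x. c)"
  by (simp add: complex_poly_fun_def poly_fun.const)

lemma complex_poly_fun_of_real: "poly_fun f \<Longrightarrow> complex_poly_fun (\<lambda>x. of_real (f x))"
  by (simp add: complex_poly_fun_def poly_fun.const)

lemma complex_poly_fun_add:
  "complex_poly_fun F \<Longrightarrow> complex_poly_fun G \<Longrightarrow> complex_poly_fun (\<lambda>x. F x + G x)"
  by (simp add: complex_poly_fun_def poly_fun.add)

lemma complex_poly_fun_diff:
  "complex_poly_fun F \<Longrightarrow> complex_poly_fun G \<Longrightarrow> complex_poly_fun (\<lambda>x. F x - G x)"
  by (simp add: complex_poly_fun_def poly_fun_diff)

lemma complex_poly_fun_mult:
  "complex_poly_fun F \<Longrightarrow> complex_poly_fun G \<Longrightarrow> complex_poly_fun (\<lambda>x. F x * G x)"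
  by (simp add: complex_poly_fun_def poly_fun_diff poly_fun.add poly_fun.mult)

lemma complex_poly_fun_prod:
  "finite A \<Longrightarrow> (\<And>a. a \<in> A \<Longrightarrow> complex_poly_fun (F a)) \<Longrightarrow> complex_poly_fun (\<lambda>x. \<Prod>a\<in>A. F a x)"
  by (induction A rule: finite_induct) (auto intro: complex_poly_fun_mult complex_poly_fun_const)

lemma complex_poly_fun_continuous_on: "complex_poly_fun F \<Longrightarrow> continuous_on S F"
proof -
  assume "complex_poly_fun F"
  then have "continuous_on S (\<lambda>x. of_real (Re (F x)) + \<i> * of_real (Im (F x)))"
    unfolding complex_poly_fun_def by (auto intro!: continuous_intros poly_fun_continuous_on)
  then show ?thesis by (simp add: complex_eq[symmetric])
qed

lemma lipschitz_on_mult_bounded: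
  fixes f g :: "'a::metric_space \<Rightarrow> real"
  assumes "L1-lipschitz_on S f" "0 \<le> M1" "\<And>x. x \<in> S \<Longrightarrow> \<bar>f x\<bar> \<le> M1"
    and "L2-lipschitz_on S g" "0 \<le> M2" "\<And>x. x \<in> S \<Longrightarrow> \<bar>g x\<bar> \<le> M2"
  shows "(M1 * L2 + M2 * L1)-lipschitz_on S (\<lambda>x. f x * g x)"
proof (rule lipschitz_onI)
  fix x y assume xy: "x \<in> S" "y \<in> S"
  have "\<bar>f x * (g x - g y)\<bar> \<le> M1 * (L2 * dist x y)"
    unfolding abs_mult using assms xy
    by (intro mult_mono) (auto simp: lipschitz_on_def dist_real_def)
  moreover have "\<bar>g y * (f x - f y)\<bar> \<le> M2 * (L1 * dist x y)"
    unfolding abs_mult using assms xy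
    by (intro mult_mono) (auto simp: lipschitz_on_def dist_real_def)
  moreover have "f x * g x - f y * g y = f x * (g x - g y) + g y * (f x - f y)"
    by (simp add: algebra_simps)
  ultimately show "dist (f x * g x) (f y * g y) \<le> (M1 * L2 + M2 * L1) * dist x y"
    unfolding dist_real_def by (smt (verit) abs_triangle_ineq distrib_right mult.assoc)
next
  show "0 \<le> M1 * L2 + M2 * L1"
    using assms(1,2,4,5) lipschitz_on_nonneg by (metis add_nonneg_nonneg mult_nonneg_nonneg)
qed

lemma poly_fun_lipschitz_on_bounded:
  fixes f :: "real ^ 'n \<Rightarrow> real"
  assumes "poly_fun f" "bounded S"
  shows "\<exists>L M. L-lipschitz_on S f \<and> 0 \<le> M \<and> (\<forall>x\<in>S. \<bar>f x\<bar> \<le> M)"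
  using assms(1)
proof (induction f rule: poly_fun.induct)
  case (const c)
  show ?case by (intro exI[of _ 0] exI[of _ "\<bar>c\<bar>"]) (auto intro: lipschitz_intros)
next
  case (coord i)
  obtain B where B: "\<And>x. x \<in> S \<Longrightarrow> norm x \<le> B" "0 \<le> B"
    using assms(2) bounded_pos by (metis less_imp_le)
  have "1-lipschitz_on S (\<lambda>x. x $ i)"
  proof (rule lipschitz_onI)
    fix x y :: "real ^ 'n"
    have "\<bar>(x - y) $ i\<bar> \<le> norm (x - y)" by (rule component_le_norm_cart)
    then show "dist (x $ i) (y $ i) \<le> 1 * dist x y" by (simp add: dist_norm dist_real_def)
  qed simp
  moreover have "\<bar>x $ i\<bar> \<le> B" if "x \<in> S" for x
    using component_le_norm_cart[of x i] B(1)[OF that] by simp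
  ultimately show ?case using B(2) by blast
next
  case (add f g)
  then obtain L1 M1 L2 M2 where "L1-lipschitz_on S f" "\<forall>x\<in>S. \<bar>f x\<bar> \<le> M1"
    "L2-lipschitz_on S g" "\<forall>x\<in>S. \<bar>g x\<bar> \<le> M2" "0 \<le> M1" "0 \<le> M2"
    by blast
  moreover have "\<forall>x\<in>S. \<bar>f x + g x\<bar> \<le> M1 + M2"
    using calculation by (smt (verit))
  ultimately show ?case
    by (intro exI[of _ "L1 + L2"] exI[of _ "M1 + M2"]) (simp add: lipschitz_on_add)
next
  case (mult f g)
  then obtain L1 M1 L2 M2 where "L1-lipschitz_on S f" "\<forall>x\<in>S. \<bar>f x\<bar> \<le> M1"
    "L2-lipschitz_on S g" "\<forall>x\<in>S. \<bar>g x\<bar> \<le> M2" "0 \<le> M1" "0 \<le> M2"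
    by blast
  moreover have "\<forall>x\<in>S. \<bar>f x * g x\<bar> \<le> M1 * M2"
    using calculation by (simp add: abs_mult mult_mono)
  ultimately show ?case
    by (intro exI[of _ "M1 * L2 + M2 * L1"] exI[of _ "M1 * M2"])
      (simp add: lipschitz_on_mult_bounded)
qed

lemma poly_vector_field_lipschitz_on_bounded:
  fixes g :: "real ^ 'n \<Rightarrow> real ^ 'n"
  assumes "poly_vector_field g" "bounded S"
  shows "\<exists>L M. L-lipschitz_on S g \<and> (\<forall>x\<in>S. norm (g x) \<le> M)"
proof -
  have "\<forall>i. \<exists>L M. L-lipschitz_on S (\<lambda>x. g x $ i) \<and> 0 \<le> M \<and> (\<forall>x\<in>S. \<bar>g x $ i\<bar> \<le> M)"
    using poly_fun_lipschitz_on_bounded[OF _ assms(2)] assms(1)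
    unfolding poly_vector_field_def by blast
  then obtain L M where L: "\<And>i. (L i)-lipschitz_on S (\<lambda>x. g x $ i)"
    and M: "\<And>i x. x \<in> S \<Longrightarrow> \<bar>g x $ i\<bar> \<le> M i"
    by metis
  have "(\<Sum>i\<in>UNIV. L i)-lipschitz_on S g"
  proof (rule lipschitz_onI)
    fix x y assume xy: "x \<in> S" "y \<in> S"
    have "dist (g x) (g y) \<le> (\<Sum>i\<in>UNIV. \<bar>(g x - g y) $ i\<bar>)"
      unfolding dist_norm by (rule norm_le_l1_cart)
    also have "\<dots> \<le> (\<Sum>i\<in>UNIV. L i * dist x y)"
      using L xy by (intro sum_mono) (simp add: lipschitz_on_def dist_real_def)
    finally show "dist (g x) (g y) \<le> (\<Sum>i\<in>UNIV. L i) * dist x y"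
      by (simp add: sum_distrib_right)
  next
    show "0 \<le> (\<Sum>i\<in>UNIV. L i)"
      using lipschitz_on_nonneg[OF L] by (simp add: sum_nonneg)
  qed
  moreover have "norm (g x) \<le> (\<Sum>i\<in>UNIV. M i)" if "x \<in> S" for x
  proof -
    have "norm (g x) \<le> (\<Sum>i\<in>UNIV. \<bar>g x $ i\<bar>)" by (rule norm_le_l1_cart)
    also have "\<dots> \<le> (\<Sum>i\<in>UNIV. M i)" using M[OF that] by (rule sum_mono)
    finally show ?thesis .
  qed
  ultimately show ?thesis by blast
qed

lemma has_vector_derivative_integral_atLeast:
  fixes f :: "real \<Rightarrow> 'a::banach"
  assumes "continuous_on {a..} f" "a \<le> t"
  shows "((\<lambda>u. integral {a..u} f) has_vector_derivative f t) (at t within {a..})"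
proof -
  have "((\<lambda>u. integral {a..u} f) has_vector_derivative f t) (at t within {a..t+1})"
    using integral_has_vector_derivative[of a "t+1" f t] continuous_on_subset[OF assms(1)] assms(2)
    by auto
  moreover have "at t within {a..t+1} = at t within {a..}"
    by (rule at_within_nhd[where S="{..<t+1}"]) auto
  ultimately show ?thesis by simp
qed

lemma continuous_on_integral_atLeast:
  fixes f :: "real \<Rightarrow> 'a::banach"
  assumes "continuous_on {a..} f"
  shows "continuous_on {a..} (\<lambda>u. integral {a..u} f)"
  using has_vector_derivative_integral_atLeast[OF assms]
  by (meson atLeast_iff continuous_on_eq_continuous_within has_vector_derivative_continuous)

lemma integral_exp_mult:
  fixes k :: real
  assumes "k \<noteq> 0" "0 \<le> t"
  shows "integral {0..t} (\<lambda>s. exp (k * s)) = (exp (k * t) - 1) / k"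
proof -
  have "((\<lambda>s. exp (k * s)) has_integral (exp (k * t) / k - exp (k * 0) / k)) {0..t}"
    using assms
    by (intro fundamental_theorem_of_calculus)
      (auto intro!: derivative_eq_intros simp flip: has_real_derivative_iff_has_vector_derivative)
  then show ?thesis by (simp add: integral_unique diff_divide_distrib)
qed

text \<open>The Picard operator in Bielecki-weighted form: a solution x is encoded as the bounded
  function t \<mapsto> exp (- k t) x t, on which the operator contracts the sup distance by the factor
  L / k, L being the Lipschitz constant of G.\<close>
definition weighted_picard ::
    "('a::banach \<Rightarrow> 'a) \<Rightarrow> real \<Rightarrow> 'a \<Rightarrow> (real \<Rightarrow>\<^sub>C 'a) \<Rightarrow> real \<Rightarrow> 'a" where
  "weighted_picard G k x0 y t =
     exp (- k * max 0 t) *\<^sub>R (x0 + integral {0..max 0 t} (\<lambda>s. G (exp (k * s) *\<^sub>R y s)))"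

lemma weighted_picard_integrand_continuous:
  fixes G :: "'a::banach \<Rightarrow> 'a"
  assumes "continuous_on UNIV G"
  shows "continuous_on UNIV (\<lambda>s. G (exp (k * s) *\<^sub>R apply_bcontfun y s))"
  by (rule continuous_on_compose2[OF assms]) (auto intro!: continuous_intros)

lemma weighted_picard_bcontfun:
  fixes G :: "'a::banach \<Rightarrow> 'a"
  assumes "continuous_on UNIV G" "\<And>x. norm (G x) \<le> M" "0 < k"
  shows "weighted_picard G k x0 y \<in> bcontfun"
proof (rule bcontfun_normI)
  note cont = weighted_picard_integrand_continuous[OF assms(1), of k y]
  have "continuous_on {0..} (\<lambda>u. exp (- k * u) *\<^sub>R
      (x0 + integral {0..u} (\<lambda>s. G (exp (k * s) *\<^sub>R apply_bcontfun y s))))"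
    by (intro continuous_intros continuous_on_integral_atLeast continuous_on_subset[OF cont]) auto
  then show "continuous_on UNIV (weighted_picard G k x0 y)"
    unfolding weighted_picard_def
    by (rule continuous_on_compose2) (auto intro!: continuous_intros)
  fix t :: real
  define u where "u = max 0 t"
  have u: "0 \<le> u" by (simp add: u_def)
  have M: "0 \<le> M" using assms(2)[of 0] by (meson norm_ge_zero order_trans)
  have "norm (integral {0..u} (\<lambda>s. G (exp (k * s) *\<^sub>R y s))) \<le> M * u"
    using integral_bound[OF u continuous_on_subset[OF cont]] assms(2) by simp
  then have "norm (weighted_picard G k x0 y t) \<le> exp (- k * u) * (norm x0 + M * u)"
    unfolding weighted_picard_def u_def[symmetric]
    by (intro order_trans[OF norm_scaleR[THEN eq_refl]]) (simp add: norm_triangle_le mult_left_mono)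
  also have "\<dots> \<le> norm x0 + M / k"
  proof -
    have "k * u \<le> exp (k * u)"
      using exp_ge_add_one_self[of "k * u"] by linarith
    then have "exp (- k * u) * (k * u) \<le> 1"
      by (simp add: exp_minus field_simps)
    then have "(M / k) * (exp (- k * u) * (k * u)) \<le> M / k"
      using assms(3) M by (intro mult_left_le) auto
    then have "exp (- k * u) * (M * u) \<le> M / k"
      using assms(3) by (simp add: mult_ac)
    moreover have "exp (- k * u) * norm x0 \<le> norm x0"
      using assms(3) u by (intro mult_left_le_one_le) auto
    ultimately show ?thesis by (simp add: distrib_left)
  qed
  finally show "norm (weighted_picard G k x0 y t) \<le> norm x0 + M / k" .
qed

lemma weighted_picard_dist_le:
  fixes G :: "'a::banach \<Rightarrow> 'a"
  assumes "L-lipschitz_on UNIV G" "0 < k"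
  shows "dist (weighted_picard G k x0 y1 t) (weighted_picard G k x0 y2 t) \<le> L / k * dist y1 y2"
proof -
  define u where "u = max 0 t"
  define D where "D = dist y1 y2"
  have u: "0 \<le> u" by (simp add: u_def)
  have L: "0 \<le> L" using assms(1) by (rule lipschitz_on_nonneg)
  note cont = weighted_picard_integrand_continuous[OF lipschitz_on_continuous_on[OF assms(1)]]
  have int: "(\<lambda>s. G (exp (k * s) *\<^sub>R apply_bcontfun y s)) integrable_on {0..u}" for y
    by (rule integrable_continuous_real) (rule continuous_on_subset[OF cont], simp)
  have pointwise: "norm (G (exp (k * s) *\<^sub>R y1 s) - G (exp (k * s) *\<^sub>R y2 s)) \<le> L * D * exp (k * s)"
    for s
  proof -
    have "norm (G (exp (k * s) *\<^sub>R y1 s) - G (exp (k * s) *\<^sub>R y2 s))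
        \<le> L * norm (exp (k * s) *\<^sub>R y1 s - exp (k * s) *\<^sub>R y2 s)"
      using lipschitz_on_normD[OF assms(1)] by blast
    also have "\<dots> = L * exp (k * s) * dist (y1 s) (y2 s)"
      by (simp add: dist_norm flip: scaleR_diff_right)
    also have "\<dots> \<le> L * exp (k * s) * D"
      unfolding D_def using L by (intro mult_left_mono dist_bounded) auto
    finally show ?thesis by (simp add: mult_ac)
  qed
  have "norm (integral {0..u} (\<lambda>s. G (exp (k * s) *\<^sub>R y1 s))
      - integral {0..u} (\<lambda>s. G (exp (k * s) *\<^sub>R y2 s)))
      \<le> integral {0..u} (\<lambda>s. L * D * exp (k * s))"
    unfolding integral_diff[OF int int, symmetric]
    by (intro integral_norm_bound_integral integrable_diff int pointwise
        integrable_continuous_real continuous_intros)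
  also have "\<dots> = L * D * ((exp (k * u) - 1) / k)"
    using integral_exp_mult[of k u] assms(2) u by simp
  finally have bound: "norm (integral {0..u} (\<lambda>s. G (exp (k * s) *\<^sub>R y1 s))
      - integral {0..u} (\<lambda>s. G (exp (k * s) *\<^sub>R y2 s))) \<le> L * D * ((exp (k * u) - 1) / k)" .
  have "dist (weighted_picard G k x0 y1 t) (weighted_picard G k x0 y2 t)
      = exp (- k * u) * norm (integral {0..u} (\<lambda>s. G (exp (k * s) *\<^sub>R y1 s))
          - integral {0..u} (\<lambda>s. G (exp (k * s) *\<^sub>R y2 s)))"
    unfolding weighted_picard_def dist_norm u_def[symmetric] by (simp flip: scaleR_diff_right)
  also have "\<dots> \<le> exp (- k * u) * (L * D * ((exp (k * u) - 1) / k))"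
    using bound by (rule mult_left_mono) simp
  also have "\<dots> = L / k * D * (1 - exp (- k * u))"
    by (simp add: field_simps exp_minus)
  also have "\<dots> \<le> L / k * D"
    using L assms(2) by (intro mult_left_le) (auto simp: D_def)
  finally show ?thesis by (simp add: D_def)
qed

lemma bounded_lipschitz_ode_exists:
  fixes G :: "'a::banach \<Rightarrow> 'a"
  assumes "L-lipschitz_on UNIV G" "\<And>x. norm (G x) \<le> M"
  obtains x where "x 0 = \<xi>" "\<And>t. 0 \<le> t \<Longrightarrow> (x has_vector_derivative G (x t)) (at t within {0..})"
proof -
  define k where "k = 2 * L + 1"
  have L: "0 \<le> L" using assms(1) by (rule lipschitz_on_nonneg)
  then have k: "0 < k" by (simp add: k_def)
  have G: "continuous_on UNIV G" using assms(1) by (rule lipschitz_on_continuous_on)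
  define \<Phi> where "\<Phi> y = Bcontfun (weighted_picard G k \<xi> y)" for y
  have \<Phi>: "apply_bcontfun (\<Phi> y) = weighted_picard G k \<xi> y" for y
    unfolding \<Phi>_def using weighted_picard_bcontfun[OF G assms(2) k]
    by (simp add: Bcontfun_inverse)
  have "dist (\<Phi> y1) (\<Phi> y2) \<le> L / k * dist y1 y2" for y1 y2
    unfolding dist_bcontfun_def[symmetric]
    by (rule dist_bound) (unfold \<Phi>, rule weighted_picard_dist_le[OF assms(1) k])
  moreover have "L / k < 1" using L by (simp add: k_def)
  ultimately obtain y where y: "\<Phi> y = y"
    using banach_fix_type[of "L / k" \<Phi>] L k by auto
  define x where "x t = exp (k * t) *\<^sub>R y t" for t
  have x_integral: "x t = \<xi> + integral {0..t} (\<lambda>s. G (x s))" if "0 \<le> t" for t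
  proof -
    have "x t = exp (k * t) *\<^sub>R weighted_picard G k \<xi> y t"
      unfolding x_def by (metis y \<Phi>)
    with that show ?thesis by (simp add: weighted_picard_def x_def flip: exp_add)
  qed
  have cont: "continuous_on {0..} (\<lambda>s. G (x s))"
    unfolding x_def by (rule continuous_on_compose2[OF G]) (auto intro!: continuous_intros)
  have "(x has_vector_derivative G (x t)) (at t within {0..})" if t: "t \<in> {0..}" for t
  proof -
    have "((\<lambda>u. \<xi> + integral {0..u} (\<lambda>s. G (x s))) has_vector_derivative G (x t))
        (at t within {0..})"
      using has_vector_derivative_integral_atLeast[OF cont] t by (auto intro!: derivative_eq_intros)
    then show ?thesis
      by (rule has_vector_derivative_transform[OF t, rotated]) (use x_integral in auto)
  qed
  moreover have "x 0 = \<xi>" using x_integral[of 0] by simp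
  ultimately show thesis using that by blast
qed

lemma ode_solution_on_subset:
  "ode_solution_on g x S \<Longrightarrow> T \<subseteq> S \<Longrightarrow> ode_solution_on g x T"
  unfolding ode_solution_on_def by (auto intro: has_vector_derivative_within_subset)

lemma ode_solution_on_continuous_on:
  "ode_solution_on g x S \<Longrightarrow> continuous_on S x"
  unfolding ode_solution_on_def continuous_on_eq_continuous_within
  using has_vector_derivative_continuous by blast

text \<open>A polynomial field is only locally Lipschitz; precomposing with the nearest-point
  retraction onto a ball makes it globally Lipschitz and bounded, without changing it on the ball.\<close>
lemma poly_vector_field_truncated_solution_exists:
  fixes g :: "real ^ 'n \<Rightarrow> real ^ 'n"
  assumes "poly_vector_field g" "0 < r"
  shows "\<exists>x. x 0 = x0 \<and> ode_solution_on (\<lambda>y. g (closest_point (cball p r) y)) x {0..}"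
proof -
  let ?K = "cball p r"
  have K: "convex ?K" "closed ?K" "?K \<noteq> {}" using assms(2) by auto
  obtain L M where L: "L-lipschitz_on ?K g" and M: "\<forall>y\<in>?K. norm (g y) \<le> M"
    using poly_vector_field_lipschitz_on_bounded[OF assms(1)] by blast
  have "1-lipschitz_on UNIV (closest_point ?K)"
    by (rule lipschitz_onI) (simp_all add: closest_point_lipschitz[OF K])
  moreover have "L-lipschitz_on (closest_point ?K ` UNIV) g"
    by (rule lipschitz_on_subset[OF L]) (use closest_point_in_set[OF K(2,3)] in blast)
  ultimately have "(L * 1)-lipschitz_on UNIV (\<lambda>y. g (closest_point ?K y))"
    by (rule lipschitz_on_compose2)
  moreover have "norm (g (closest_point ?K y)) \<le> M" for y
    using M closest_point_in_set[OF K(2,3)] by blast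
  ultimately obtain x where "x 0 = x0"
    "\<And>t. 0 \<le> t \<Longrightarrow> (x has_vector_derivative g (closest_point ?K (x t))) (at t within {0..})"
    by (rule bounded_lipschitz_ode_exists[where \<xi> = x0]) auto
  then show ?thesis unfolding ode_solution_on_def by (intro exI[of _ x]) simp
qed

locale lyapunov_function =
  fixes f :: "real ^ 'n \<Rightarrow> real ^ 'n" and p :: "real ^ 'n"
    and V :: "real ^ 'n \<Rightarrow> real" and DV :: "real ^ 'n \<Rightarrow> real ^ 'n \<Rightarrow> real" and r :: real
  assumes poly_field: "poly_vector_field f"
    and equilibrium: "f p = 0"
    and continuous_V: "continuous_on UNIV V"
    and V_nonneg: "0 \<le> V y"
    and V_equilibrium: "V p = 0"
    and V_small_imp_near: "0 < \<epsilon> \<Longrightarrow> \<exists>\<eta>>0. \<forall>y. V y < \<eta> \<longrightarrow> dist y p < \<epsilon>"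
    and has_real_derivative_V_comp:
      "(x has_vector_derivative d) (at t) \<Longrightarrow> ((\<lambda>t. V (x t)) has_real_derivative DV (x t) d) (at t)"
    and radius_pos: "0 < r"
    and DV_le: "dist y p < r \<Longrightarrow> DV y (f y) \<le> - V y"
begin

lemma has_real_derivative_V_solution:
  assumes "ode_solution_on h x {0..T}" "t \<in> {0<..<T}"
  shows "((\<lambda>t. V (x t)) has_real_derivative DV (x t) (h (x t))) (at t)"
proof -
  have "(x has_vector_derivative h (x t)) (at t within {0..T})"
    using assms unfolding ode_solution_on_def by auto
  moreover have "at t within {0..T} = at t"
    using assms(2) by (intro at_within_interior) auto
  ultimately show ?thesis by (intro has_real_derivative_V_comp) simp
qed

lemma continuous_on_V_solution:
  "ode_solution_on h x {0..T} \<Longrightarrow> continuous_on {0..T} (\<lambda>t. V (x t))"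
  by (rule continuous_on_compose2[OF continuous_V ode_solution_on_continuous_on]) auto

text \<open>If DV y (h y) \<le> - V y on the sublevel set {V < \<eta>}, solutions starting in it never
  leave: at the first time V reaches \<eta>, V would have decreased from its initial value.\<close>
lemma sublevel_invariant:
  assumes decay: "\<And>y. V y < \<eta> \<Longrightarrow> DV y (h y) \<le> - V y"
    and sol: "ode_solution_on h x {0..T}" and start: "V (x 0) < \<eta>"
  shows "\<forall>t\<in>{0..T}. V (x t) < \<eta>"
proof (rule ccontr)
  assume "\<not> (\<forall>t\<in>{0..T}. V (x t) < \<eta>)"
  define C where "C = {0..T} \<inter> (\<lambda>t. V (x t)) -` {\<eta>..}"
  have "C \<noteq> {}" using \<open>\<not> _\<close> by (auto simp: C_def not_less)
  moreover have "bdd_below C" unfolding C_def by (auto intro: bdd_belowI[of _ 0])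
  moreover have "closed C"
    unfolding C_def by (rule continuous_closed_preimage[OF continuous_on_V_solution[OF sol]]) auto
  ultimately have "Inf C \<in> C" by (rule closed_contains_Inf)
  define t1 where "t1 = Inf C"
  have t1: "0 \<le> t1" "t1 \<le> T" "\<eta> \<le> V (x t1)" using \<open>Inf C \<in> C\<close> by (auto simp: C_def t1_def)
  have before: "V (x t) < \<eta>" if "0 \<le> t" "t < t1" for t
  proof (rule ccontr)
    assume "\<not> V (x t) < \<eta>"
    then have "t \<in> C" using that t1 by (auto simp: C_def)
    then have "t1 \<le> t" unfolding t1_def using \<open>bdd_below C\<close> by (rule cInf_lower)
    with that show False by simp
  qed
  have "V (x t1) \<le> V (x 0)"
  proof (rule DERIV_nonpos_imp_decreasing_open[OF t1(1)])
    fix z assume z: "0 < z" "z < t1"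
    have "DV (x z) (h (x z)) \<le> - V (x z)" using before z by (intro decay) simp
    then show "\<exists>d. ((\<lambda>t. V (x t)) has_real_derivative d) (at z) \<and> d \<le> 0"
      using has_real_derivative_V_solution[OF sol] z t1 V_nonneg[of "x z"]
      by (intro exI[of _ "DV (x z) (h (x z))"]) auto
  next
    show "continuous_on {0..t1} (\<lambda>t. V (x t))"
      by (rule continuous_on_subset[OF continuous_on_V_solution[OF sol]]) (use t1 in auto)
  qed
  with t1 start show False by simp
qed

lemma exponential_decay:
  assumes decay: "\<And>y. V y < \<eta> \<Longrightarrow> DV y (h y) \<le> - V y"
    and sol: "ode_solution_on h x {0..T}" and start: "V (x 0) < \<eta>" and t: "t \<in> {0..T}"
  shows "V (x t) \<le> V (x 0) * exp (- t)"
proof -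
  have "exp t * V (x t) \<le> exp 0 * V (x 0)"
  proof (rule DERIV_nonpos_imp_decreasing_open[where f = "\<lambda>z. exp z * V (x z)"])
    fix z assume z: "0 < z" "z < t"
    have "V (x z) < \<eta>" using sublevel_invariant[OF decay sol start] z t by simp
    then have "V (x z) + DV (x z) (h (x z)) \<le> 0" using decay by fastforce
    then have "exp z * (V (x z) + DV (x z) (h (x z))) \<le> 0"
      by (intro mult_nonneg_nonpos) auto
    then show "\<exists>d. ((\<lambda>z. exp z * V (x z)) has_real_derivative d) (at z) \<and> d \<le> 0"
      using DERIV_mult[OF DERIV_exp has_real_derivative_V_solution[OF sol]] z t
      by (intro exI[of _ "exp z * V (x z) + DV (x z) (h (x z)) * exp z"]) (auto simp: algebra_simps)
  next
    show "continuous_on {0..t} (\<lambda>z. exp z * V (x z))"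
      using t by (intro continuous_intros continuous_on_subset[OF continuous_on_V_solution[OF sol]]) auto
  qed (use t in simp)
  then show ?thesis by (simp add: exp_minus field_simps)
qed

lemma stays_near:
  assumes "0 < \<epsilon>"
  obtains \<delta> where "0 < \<delta>"
    and "\<And>h x T t. (\<And>y. dist y p < r \<Longrightarrow> h y = f y) \<Longrightarrow> ode_solution_on h x {0..T} \<Longrightarrow>
           dist (x 0) p < \<delta> \<Longrightarrow> t \<in> {0..T} \<Longrightarrow>
           dist (x t) p < min \<epsilon> r \<and> V (x t) \<le> V (x 0) * exp (- t)"
proof -
  obtain \<eta> where \<eta>: "0 < \<eta>" "\<And>y. V y < \<eta> \<Longrightarrow> dist y p < min \<epsilon> r"
    using V_small_imp_near[of "min \<epsilon> r"] assms radius_pos by auto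
  have "isCont V p" using continuous_V by (simp add: continuous_on_eq_continuous_at)
  then obtain \<delta> where \<delta>: "0 < \<delta>" "\<And>y. dist y p < \<delta> \<Longrightarrow> V y < \<eta>"
    using \<eta>(1) V_equilibrium unfolding continuous_at_eps_delta
    by (metis dist_real_def diff_zero abs_less_iff)
  show thesis
  proof (rule that[OF \<delta>(1)])
    fix h x T t
    assume agree: "\<And>y. dist y p < r \<Longrightarrow> h y = f y" and sol: "ode_solution_on h x {0..T}"
      and start: "dist (x 0) p < \<delta>" and t: "t \<in> {0..T}"
    have "DV y (h y) \<le> - V y" if "V y < \<eta>" for y
      using \<eta>(2)[OF that] agree DV_le by force
    then have decay: "V (x t) \<le> V (x 0) * exp (- t)"
      using exponential_decay sol \<delta>(2)[OF start] t by blast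
    also have "\<dots> \<le> V (x 0)"
      using V_nonneg t by (intro mult_left_le) auto
    also have "\<dots> < \<eta>" using \<delta>(2)[OF start] .
    finally show "dist (x t) p < min \<epsilon> r \<and> V (x t) \<le> V (x 0) * exp (- t)"
      using \<eta>(2) decay by blast
  qed
qed

lemma lyapunov_stable: "lyapunov_stable f p"
  unfolding lyapunov_stable_def
proof (intro allI impI)
  fix \<epsilon> :: real assume "0 < \<epsilon>"
  then obtain \<delta> where \<delta>: "0 < \<delta>"
    and near: "\<And>h x T t. (\<And>y. dist y p < r \<Longrightarrow> h y = f y) \<Longrightarrow> ode_solution_on h x {0..T} \<Longrightarrow>
      dist (x 0) p < \<delta> \<Longrightarrow> t \<in> {0..T} \<Longrightarrow> dist (x t) p < min \<epsilon> r"
    using stays_near by metis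
  have "(\<exists>x. x 0 = x0 \<and> ode_solution_on f x {0..}) \<and>
      (\<forall>x T. 0 \<le> T \<longrightarrow> x 0 = x0 \<longrightarrow> ode_solution_on f x {0..T} \<longrightarrow>
         (\<forall>t\<in>{0..T}. dist (x t) p < \<epsilon>))"
    if start: "dist x0 p < \<delta>" for x0
  proof
    define G where "G y = f (closest_point (cball p r) y)" for y
    have agree: "G y = f y" if "dist y p < r" for y
      using that closest_point_self[of y "cball p r"] by (simp add: G_def dist_commute)
    obtain x where x: "x 0 = x0" "ode_solution_on G x {0..}"
      using poly_vector_field_truncated_solution_exists[OF poly_field radius_pos] unfolding G_def by blast
    have "G (x t) = f (x t)" if "t \<in> {0..}" for t
      using near[OF agree ode_solution_on_subset[OF x(2)], of t t] x(1) start that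
      by (intro agree) auto
    then have "ode_solution_on f x {0..}"
      using x(2) unfolding ode_solution_on_def by metis
    with x(1) show "\<exists>x. x 0 = x0 \<and> ode_solution_on f x {0..}" by blast
  next
    show "\<forall>x T. 0 \<le> T \<longrightarrow> x 0 = x0 \<longrightarrow> ode_solution_on f x {0..T} \<longrightarrow>
        (\<forall>t\<in>{0..T}. dist (x t) p < \<epsilon>)"
      using near[of f] start by fastforce
  qed
  with \<delta> show "\<exists>\<delta>>0. \<forall>x0. dist x0 p < \<delta> \<longrightarrow> (\<exists>x. x 0 = x0 \<and> ode_solution_on f x {0..}) \<and>
      (\<forall>x T. 0 \<le> T \<longrightarrow> x 0 = x0 \<longrightarrow> ode_solution_on f x {0..T} \<longrightarrow>
         (\<forall>t\<in>{0..T}. dist (x t) p < \<epsilon>))"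
    by blast
qed

lemma attractive: "attractive f p"
  unfolding attractive_def
proof -
  obtain \<delta> where \<delta>: "0 < \<delta>"
    and decay: "\<And>x T t. ode_solution_on f x {0..T} \<Longrightarrow> dist (x 0) p < \<delta> \<Longrightarrow> t \<in> {0..T} \<Longrightarrow>
      V (x t) \<le> V (x 0) * exp (- t)"
    using stays_near[OF radius_pos] by metis
  have "(x \<longlongrightarrow> p) at_top" if start: "dist (x 0) p < \<delta>" and sol: "ode_solution_on f x {0..}" for x
  proof (rule tendstoI)
    fix \<epsilon> :: real assume "0 < \<epsilon>"
    then obtain \<eta> where \<eta>: "0 < \<eta>" "\<And>y. V y < \<eta> \<Longrightarrow> dist y p < \<epsilon>"
      using V_small_imp_near by blast
    have "((\<lambda>t. V (x 0) * exp (- t)) \<longlongrightarrow> V (x 0) * 0) at_top"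
      by (intro tendsto_mult tendsto_const filterlim_compose[OF exp_at_bot]
          filterlim_uminus_at_bot_at_top)
    then have "\<forall>\<^sub>F t in at_top. V (x 0) * exp (- t) < \<eta>"
      using \<eta>(1) by (simp add: order_tendstoD(2))
    moreover have "\<forall>\<^sub>F t in at_top. V (x t) \<le> V (x 0) * exp (- t)"
      using eventually_ge_at_top[of 0]
    proof eventually_elim
      case (elim t)
      then show ?case
        using decay[OF ode_solution_on_subset[OF sol] start, of t t] by auto
    qed
    ultimately show "\<forall>\<^sub>F t in at_top. dist (x t) p < \<epsilon>"
      by eventually_elim (use \<eta>(2) in fastforce)
  qed
  with \<delta> show "\<exists>\<eta>>0. \<forall>x. dist (x 0) p < \<eta> \<longrightarrow> ode_solution_on f x {0..} \<longrightarrow> (x \<longlongrightarrow> p) at_top"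
    by blast
qed

theorem asymptotically_stable_equilibrium: "asymptotically_stable_equilibrium f p"
  unfolding asymptotically_stable_equilibrium_def
  using equilibrium lyapunov_stable attractive by blast

end

lemma has_real_derivative_inner_self:
  fixes f :: "real \<Rightarrow> 'a::real_inner"
  assumes "(f has_vector_derivative f') (at t)"
  shows "((\<lambda>t. f t \<bullet> f t) has_real_derivative 2 * (f t \<bullet> f')) (at t)"
proof -
  note f = assms[unfolded has_vector_derivative_def]
  have "((\<lambda>t. f t \<bullet> f t) has_derivative (\<lambda>h. f t \<bullet> (h *\<^sub>R f') + (h *\<^sub>R f') \<bullet> f t)) (at t)"
    using has_derivative_inner[OF f f] .
  moreover have "(\<lambda>h. f t \<bullet> (h *\<^sub>R f') + (h *\<^sub>R f') \<bullet> f t) = (*) (2 * (f t \<bullet> f'))"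
    by (auto simp: inner_commute algebra_simps)
  ultimately show ?thesis by (simp add: has_field_derivative_def)
qed

locale sink_field_construction =
  fixes X :: "(real ^ 'n) set" and c e :: "real ^ 'n"
  assumes finite_X: "finite X" and norm_c: "norm c = 1" and norm_e: "norm e = 1"
    and orthogonal_c_e: "c \<bullet> e = 0" and inj_height: "inj_on (\<lambda>p. c \<bullet> p) X"
begin

definition s :: "real ^ 'n \<Rightarrow> real" where "s y = c \<bullet> y"

definition lagrange_basis :: "real ^ 'n \<Rightarrow> real poly" where
  "lagrange_basis p = (\<Prod>j\<in>X - {p}. [:- s j, 1:])"

definition lagrange_denom :: "real ^ 'n \<Rightarrow> real" where
  "lagrange_denom p = poly (lagrange_basis p) (s p)"

definition node_poly :: "real \<Rightarrow> real" where "node_poly t = (\<Prod>j\<in>X. t - s j)"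

text \<open>alpha (s p) = - 1 / lagrange_denom p makes the factor h of F equal -1 at each node p, and
  w = alpha + i node_poly has no zeros since node_poly vanishes only at the nodes.\<close>
definition alpha :: "real \<Rightarrow> real" where
  "alpha t = - (\<Sum>p\<in>X. poly (lagrange_basis p) t / (lagrange_denom p)\<^sup>2)"

definition curve :: "real \<Rightarrow> real ^ 'n" where
  "curve t = (\<Sum>p\<in>X. (poly (lagrange_basis p) t / lagrange_denom p) *\<^sub>R (p - s p *\<^sub>R c))"

definition curve' :: "real \<Rightarrow> real ^ 'n" where
  "curve' t = (\<Sum>p\<in>X. (poly (pderiv (lagrange_basis p)) t / lagrange_denom p) *\<^sub>R (p - s p *\<^sub>R c))"

definition offset :: "real ^ 'n \<Rightarrow> real ^ 'n" where "offset y = y - s y *\<^sub>R c - curve (s y)"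

definition v :: "real ^ 'n \<Rightarrow> real" where "v y = e \<bullet> offset y"

definition zeta :: "real ^ 'n \<Rightarrow> complex" where "zeta y = of_real (s y) + \<i> * of_real (v y)"

definition w :: "real \<Rightarrow> complex" where "w t = of_real (alpha t) + \<i> * of_real (node_poly t)"

definition F :: "real ^ 'n \<Rightarrow> complex" where "F y = (\<Prod>j\<in>X. zeta y - of_real (s j)) * w (s y)"

definition g :: "real ^ 'n \<Rightarrow> real ^ 'n" where
  "g y = Re (F y) *\<^sub>R c + Re (F y) *\<^sub>R curve' (s y) + Im (F y) *\<^sub>R e - offset y + v y *\<^sub>R e"

lemma inner_c_c: "c \<bullet> c = 1"
  using norm_c by (simp add: dot_square_norm)

lemma inner_e_e: "e \<bullet> e = 1"
  using norm_e by (simp add: dot_square_norm)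

lemma poly_lagrange_basis: "poly (lagrange_basis p) t = (\<Prod>j\<in>X - {p}. t - s j)"
  by (simp add: lagrange_basis_def poly_prod)

lemma lagrange_denom_nonzero: "p \<in> X \<Longrightarrow> lagrange_denom p \<noteq> 0"
  unfolding lagrange_denom_def poly_lagrange_basis
  using finite_X inj_height by (auto simp: s_def inj_on_def)

lemma poly_lagrange_basis_node: "j \<in> X \<Longrightarrow> j \<noteq> p \<Longrightarrow> poly (lagrange_basis p) (s j) = 0"
  unfolding poly_lagrange_basis using finite_X by (intro prod_zero) auto

lemma sum_X_single:
  assumes "j \<in> X" "\<And>p. p \<in> X \<Longrightarrow> p \<noteq> j \<Longrightarrow> f p = 0"
  shows "(\<Sum>p\<in>X. f p) = f j"
  using assms finite_X by (simp add: sum.remove)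

lemma curve_node: "j \<in> X \<Longrightarrow> curve (s j) = j - s j *\<^sub>R c"
  unfolding curve_def using lagrange_denom_nonzero poly_lagrange_basis_node
  by (subst sum_X_single[of j]) (auto simp: lagrange_denom_def)

lemma alpha_node: "j \<in> X \<Longrightarrow> alpha (s j) = - 1 / lagrange_denom j"
  unfolding alpha_def using lagrange_denom_nonzero poly_lagrange_basis_node
  by (subst sum_X_single[of j]) (auto simp: lagrange_denom_def power2_eq_square)

lemma inner_c_curve: "c \<bullet> curve t = 0"
  unfolding curve_def by (simp add: inner_sum_right inner_diff_right inner_c_c s_def)

lemma inner_c_curve': "c \<bullet> curve' t = 0"
  unfolding curve'_def by (simp add: inner_sum_right inner_diff_right inner_c_c s_def)

lemma inner_c_offset: "c \<bullet> offset y = 0"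
  unfolding offset_def by (simp add: inner_diff_right inner_c_c inner_c_curve s_def)

lemma decompose: "y = s y *\<^sub>R c + curve (s y) + offset y"
  unfolding offset_def by simp

lemma w_nonzero: "w t \<noteq> 0"
proof
  assume "w t = 0"
  then have "alpha t = 0" "node_poly t = 0" unfolding w_def by (simp_all add: complex_eq_iff)
  moreover from \<open>node_poly t = 0\<close> obtain j where "j \<in> X" "t = s j"
    unfolding node_poly_def using finite_X by auto
  ultimately show False using alpha_node lagrange_denom_nonzero by auto
qed

lemma inner_c_g: "c \<bullet> g y = Re (F y)"
  unfolding g_def
  by (simp add: inner_diff_right inner_add_right inner_c_c inner_c_curve' inner_c_offset orthogonal_c_e)

lemma g_eq_zero_imp_mem: "g y = 0 \<Longrightarrow> y \<in> X"
proof -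
  assume g0: "g y = 0"
  have Re: "Re (F y) = 0" using inner_c_g[of y] g0 by simp
  then have g_eq: "g y = Im (F y) *\<^sub>R e - offset y + v y *\<^sub>R e" by (simp add: g_def)
  have "e \<bullet> g y = Im (F y)"
    unfolding g_eq by (simp add: inner_diff_right inner_add_right inner_e_e v_def)
  then have Im: "Im (F y) = 0" using g0 by simp
  with Re have "F y = 0" by (simp add: complex_eq_iff)
  then obtain j where j: "j \<in> X" "zeta y = of_real (s j)"
    unfolding F_def using w_nonzero finite_X by auto
  then have "s y = s j" "v y = 0" by (simp_all add: zeta_def complex_eq_iff)
  moreover from this have "offset y = 0" using g0 g_eq Im by simp
  ultimately have "y = s j *\<^sub>R c + curve (s j)" using decompose[of y] by simp
  with j show "y \<in> X" using curve_node by simp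
qed

lemma offset_node: "j \<in> X \<Longrightarrow> offset j = 0"
  unfolding offset_def curve_node by simp

lemma zeta_node: "j \<in> X \<Longrightarrow> zeta j = of_real (s j)"
  by (simp add: zeta_def v_def offset_node)

lemma g_node: "j \<in> X \<Longrightarrow> g j = 0"
proof -
  assume j: "j \<in> X"
  then have "F j = 0" unfolding F_def using finite_X by (simp add: zeta_node) blast
  with j show "g j = 0" by (simp add: g_def offset_node v_def)
qed

lemma poly_fun_s: "poly_fun s"
  unfolding s_def[abs_def] by (rule poly_fun_inner_left)

lemma poly_fun_poly_s: "poly_fun (\<lambda>y. poly q (s y))"
  by (rule poly_fun_poly_comp[OF poly_fun_s])

lemma poly_fun_curve_s: "poly_fun (\<lambda>y. curve (s y) $ i)"
  unfolding curve_def sum_component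
  by (auto intro!: poly_fun_sum finite_X poly_fun.mult poly_fun.const poly_fun_poly_s
      simp: divide_inverse)

lemma poly_fun_curve'_s: "poly_fun (\<lambda>y. curve' (s y) $ i)"
  unfolding curve'_def sum_component
  by (auto intro!: poly_fun_sum finite_X poly_fun.mult poly_fun.const poly_fun_poly_s
      simp: divide_inverse)

lemma poly_fun_offset: "poly_fun (\<lambda>y. offset y $ i)"
  unfolding offset_def
  by (auto intro!: poly_fun_diff poly_fun.coord poly_fun.mult poly_fun_s poly_fun.const poly_fun_curve_s)

lemma poly_fun_v: "poly_fun v"
  unfolding v_def[abs_def] inner_commute[of e] by (intro poly_fun_inner_right poly_fun_offset)

lemma complex_poly_fun_zeta: "complex_poly_fun zeta"
  unfolding zeta_def[abs_def]
  by (intro complex_poly_fun_add complex_poly_fun_mult complex_poly_fun_of_real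
      complex_poly_fun_const poly_fun_s poly_fun_v)

lemma complex_poly_fun_w_s: "complex_poly_fun (\<lambda>y. w (s y))"
proof -
  have "poly_fun (\<lambda>y. alpha (s y))"
    unfolding alpha_def
    by (auto intro!: poly_fun_minus poly_fun_sum finite_X poly_fun.mult poly_fun.const
        poly_fun_poly_s simp: divide_inverse)
  moreover have "poly_fun (\<lambda>y. node_poly (s y))"
    unfolding node_poly_def by (auto intro!: poly_fun_prod finite_X poly_fun_diff poly_fun.const poly_fun_s)
  ultimately show ?thesis
    unfolding w_def
    by (intro complex_poly_fun_add complex_poly_fun_mult complex_poly_fun_of_real complex_poly_fun_const)
qed

lemma complex_poly_fun_prod_zeta:
  "complex_poly_fun (\<lambda>y. \<Prod>j\<in>A. zeta y - of_real (s j))" if "finite A"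
  using that by (intro complex_poly_fun_prod complex_poly_fun_diff complex_poly_fun_zeta
      complex_poly_fun_const)

lemma poly_vector_field_g: "poly_vector_field g"
  unfolding poly_vector_field_def
proof
  fix i
  have "complex_poly_fun F"
    unfolding F_def[abs_def]
    by (intro complex_poly_fun_mult complex_poly_fun_prod_zeta finite_X complex_poly_fun_w_s)
  then have "poly_fun (\<lambda>y. Re (F y))" "poly_fun (\<lambda>y. Im (F y))"
    by (auto simp: complex_poly_fun_def)
  then show "poly_fun (\<lambda>y. g y $ i)"
    unfolding g_def
    by (auto intro!: poly_fun.add poly_fun_diff poly_fun.mult poly_fun.const poly_fun_curve'_s
        poly_fun_offset poly_fun_v)
qed

lemma has_vector_derivative_curve: "(curve has_vector_derivative curve' t) (at t)"
  unfolding curve_def curve'_def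
  by (auto intro!: derivative_eq_intros poly_DERIV
      simp: lagrange_denom_nonzero simp flip: has_real_derivative_iff_has_vector_derivative)

definition V :: "real ^ 'n \<Rightarrow> real ^ 'n \<Rightarrow> real" where
  "V p y = (s y - s p)\<^sup>2 + offset y \<bullet> offset y"

definition DV :: "real ^ 'n \<Rightarrow> real ^ 'n \<Rightarrow> real ^ 'n \<Rightarrow> real" where
  "DV p y d = 2 * (s y - s p) * (c \<bullet> d) + 2 * (offset y \<bullet> (d - (c \<bullet> d) *\<^sub>R c - (c \<bullet> d) *\<^sub>R curve' (s y)))"

lemma has_real_derivative_V_comp:
  assumes "(x has_vector_derivative d) (at t)"
  shows "((\<lambda>t. V p (x t)) has_real_derivative DV p (x t) d) (at t)"
proof -
  have "((\<lambda>t. c \<bullet> x t) has_derivative (\<lambda>h. c \<bullet> (h *\<^sub>R d))) (at t)"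
    by (rule bounded_linear.has_derivative[OF bounded_linear_inner_right
          assms[unfolded has_vector_derivative_def]])
  then have s_deriv: "((\<lambda>t. s (x t)) has_real_derivative c \<bullet> d) (at t)"
    unfolding s_def has_real_derivative_iff_has_vector_derivative has_vector_derivative_def
    by (simp add: mult.commute)
  have "((\<lambda>t. curve (s (x t))) has_vector_derivative (c \<bullet> d) *\<^sub>R curve' (s (x t))) (at t)"
    using vector_diff_chain_at[OF s_deriv[unfolded has_real_derivative_iff_has_vector_derivative]
        has_vector_derivative_curve]
    by (simp add: o_def)
  then have offset_deriv: "((\<lambda>t. offset (x t)) has_vector_derivative
      (d - (c \<bullet> d) *\<^sub>R c - (c \<bullet> d) *\<^sub>R curve' (s (x t)))) (at t)"
    unfolding offset_def
    using assms s_deriv s_deriv[unfolded has_real_derivative_iff_has_vector_derivative]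
    by (auto intro!: derivative_eq_intros)
  have "((\<lambda>t. (s (x t) - s p)\<^sup>2) has_real_derivative 2 * (s (x t) - s p) * (c \<bullet> d)) (at t)"
    using s_deriv by (auto intro!: derivative_eq_intros)
  from DERIV_add[OF this has_real_derivative_inner_self[OF offset_deriv]] show ?thesis
    unfolding V_def DV_def by simp
qed

definition h :: "real ^ 'n \<Rightarrow> real ^ 'n \<Rightarrow> complex" where
  "h p y = (\<Prod>j\<in>X - {p}. zeta y - of_real (s j)) * w (s y)"

lemma F_eq_h: "p \<in> X \<Longrightarrow> F y = (zeta y - of_real (s p)) * h p y"
  unfolding F_def h_def using finite_X by (simp add: prod.remove mult.assoc)

text \<open>With z = zeta y - s p we have F = z h, so the planar part of DV p y (g y) is
  2 Re (conj z F) = 2 |z|^2 Re h, while the transverse part is 2 (v^2 - |offset|^2) \<le> 0.\<close>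
lemma DV_g_le:
  assumes p: "p \<in> X" and Re_h: "Re (h p y) \<le> - 1 / 2"
  shows "DV p y (g y) \<le> - V p y"
proof -
  define \<sigma> where "\<sigma> = s y - s p"
  have g_offset: "g y - (c \<bullet> g y) *\<^sub>R c - (c \<bullet> g y) *\<^sub>R curve' (s y) = Im (F y) *\<^sub>R e - offset y + v y *\<^sub>R e"
    unfolding inner_c_g by (simp add: g_def algebra_simps)
  have DV_eq: "DV p y (g y) = 2 * (\<sigma> * Re (F y) + Im (F y) * v y) - 2 * (offset y \<bullet> offset y) + 2 * (v y)\<^sup>2"
    unfolding DV_def g_offset unfolding inner_c_g \<sigma>_def[symmetric]
    by (simp add: inner_diff_right inner_add_right inner_commute[of _ e] v_def[symmetric]
        power2_eq_square algebra_simps)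
  have "zeta y - of_real (s p) = Complex \<sigma> (v y)"
    by (simp add: zeta_def \<sigma>_def complex_eq_iff)
  then have "\<sigma> * Re (F y) + Im (F y) * v y = (\<sigma>\<^sup>2 + (v y)\<^sup>2) * Re (h p y)"
    using F_eq_h[OF p, of y] by (simp add: power2_eq_square algebra_simps)
  also have "\<dots> \<le> (\<sigma>\<^sup>2 + (v y)\<^sup>2) * (- 1 / 2)"
    using Re_h by (intro mult_left_mono) auto
  finally have planar: "2 * (\<sigma> * Re (F y) + Im (F y) * v y) \<le> - (\<sigma>\<^sup>2 + (v y)\<^sup>2)"
    by (simp add: algebra_simps)
  have "\<bar>v y\<bar> \<le> norm (offset y)"
    using Cauchy_Schwarz_ineq2[of e "offset y"] norm_e by (simp add: v_def)
  then have "(v y)\<^sup>2 \<le> offset y \<bullet> offset y"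
    using power_mono[of "\<bar>v y\<bar>" "norm (offset y)" 2] by (simp add: dot_square_norm)
  with planar show ?thesis unfolding DV_eq V_def \<sigma>_def by linarith
qed

lemma h_node: "p \<in> X \<Longrightarrow> h p p = - 1"
proof -
  assume p: "p \<in> X"
  have "(\<Prod>j\<in>X - {p}. zeta p - of_real (s j)) = of_real (lagrange_denom p)"
    by (simp add: zeta_node[OF p] lagrange_denom_def poly_lagrange_basis)
  moreover have "node_poly (s p) = 0"
    unfolding node_poly_def using finite_X p by (intro prod_zero) auto
  ultimately show ?thesis
    unfolding h_def w_def using alpha_node[OF p] lagrange_denom_nonzero[OF p]
    by (simp add: field_simps of_real_def)
qed

lemma Re_h_near_node:
  assumes p: "p \<in> X"
  obtains r where "0 < r" "\<And>y. dist y p < r \<Longrightarrow> Re (h p y) \<le> - 1 / 2"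
proof -
  have "complex_poly_fun (h p)"
    unfolding h_def[abs_def]
    by (intro complex_poly_fun_mult complex_poly_fun_prod_zeta complex_poly_fun_w_s) (simp add: finite_X)
  then have "isCont (h p) p"
    using complex_poly_fun_continuous_on continuous_on_eq_continuous_at open_UNIV by blast
  then obtain r where r: "0 < r" "\<And>y. dist y p < r \<Longrightarrow> dist (h p y) (h p p) < 1 / 2"
    unfolding continuous_at_eps_delta by (meson half_gt_zero zero_less_one)
  have "Re (h p y) \<le> - 1 / 2" if "dist y p < r" for y
    using r(2)[OF that] abs_Re_le_cmod[of "h p y + 1"] h_node[OF p] by (simp add: dist_norm)
  with r(1) show thesis by (rule that)
qed

lemma V_small_imp_near_node:
  assumes p: "p \<in> X" and "0 < \<epsilon>"
  shows "\<exists>\<eta>>0. \<forall>y. V p y < \<eta> \<longrightarrow> dist y p < \<epsilon>"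
proof -
  have "isCont curve (s p)"
    using has_vector_derivative_curve has_vector_derivative_continuous by blast
  moreover have "0 < \<epsilon> / 3" using assms(2) by simp
  ultimately obtain \<delta> where \<delta>: "0 < \<delta>" "\<And>t. dist t (s p) < \<delta> \<Longrightarrow> dist (curve t) (curve (s p)) < \<epsilon> / 3"
    unfolding continuous_at_eps_delta by blast
  define \<eta> where "\<eta> = min (\<delta>\<^sup>2) ((\<epsilon> / 3)\<^sup>2)"
  have "dist y p < \<epsilon>" if V: "V p y < \<eta>" for y
  proof -
    define \<sigma> where "\<sigma> = s y - s p"
    have squares: "\<sigma>\<^sup>2 < \<delta>\<^sup>2" "\<sigma>\<^sup>2 < (\<epsilon> / 3)\<^sup>2" "(norm (offset y))\<^sup>2 < (\<epsilon> / 3)\<^sup>2"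
      using V unfolding V_def \<eta>_def \<sigma>_def dot_square_norm power2_norm_eq_inner[symmetric]
      by (smt (verit) zero_le_power2)+
    have small: "\<bar>\<sigma>\<bar> < \<delta>" "\<bar>\<sigma>\<bar> < \<epsilon> / 3" "norm (offset y) < \<epsilon> / 3"
      by (rule power2_less_imp_less; use squares \<delta>(1) assms(2) in simp)+
    have "y - p = \<sigma> *\<^sub>R c + (curve (s y) - curve (s p)) + offset y"
      using decompose[of y] curve_node[OF p] by (simp add: \<sigma>_def algebra_simps)
    then have "norm (y - p) \<le> norm (\<sigma> *\<^sub>R c + (curve (s y) - curve (s p))) + norm (offset y)"
      by (simp add: norm_triangle_ineq)
    also have "\<dots> \<le> norm (\<sigma> *\<^sub>R c) + norm (curve (s y) - curve (s p)) + norm (offset y)"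
      by (intro add_right_mono norm_triangle_ineq)
    also have "norm (\<sigma> *\<^sub>R c) = \<bar>\<sigma>\<bar>" using norm_c by simp
    also have "norm (curve (s y) - curve (s p)) < \<epsilon> / 3"
      using \<delta>(2)[of "s y"] small(1) by (simp add: dist_norm \<sigma>_def)
    finally show ?thesis using small(2,3) by (simp add: dist_norm)
  qed
  moreover have "0 < \<eta>" using \<delta>(1) assms(2) by (simp add: \<eta>_def)
  ultimately show ?thesis by blast
qed

lemma lyapunov_function_node:
  assumes p: "p \<in> X"
  obtains r where "lyapunov_function g p (V p) (DV p) r"
proof -
  obtain r where r: "0 < r" "\<And>y. dist y p < r \<Longrightarrow> Re (h p y) \<le> - 1 / 2"
    using Re_h_near_node[OF p] by blast
  have "poly_fun (V p)"
    unfolding V_def[abs_def] power2_eq_square inner_vec_def inner_real_def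
    by (intro poly_fun.add poly_fun.mult poly_fun_diff poly_fun_s poly_fun.const poly_fun_sum
        poly_fun_offset finite)
  then have "continuous_on UNIV (V p)" by (rule poly_fun_continuous_on)
  then have "lyapunov_function g p (V p) (DV p) r"
    using p r poly_vector_field_g g_node offset_node has_real_derivative_V_comp V_small_imp_near_node DV_g_le
    by unfold_locales (auto simp: V_def[abs_def])
  then show thesis by (rule that)
qed

end

text \<open>Perturbing c along the new vector d only fails for finitely many step sizes.\<close>
lemma exists_inner_nonzero_finite:
  fixes D :: "'a::real_inner set"
  assumes "finite D" "0 \<notin> D"
  shows "\<exists>c. \<forall>d\<in>D. c \<bullet> d \<noteq> 0"
  using assms
proof (induction D rule: finite_induct)
  case (insert d D)
  then obtain c where c: "\<forall>d'\<in>D. c \<bullet> d' \<noteq> 0" by auto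
  have "finite (insert 0 ((\<lambda>d'. - (c \<bullet> d') / (d \<bullet> d')) ` D))" using insert by simp
  then obtain t :: real where t: "t \<notin> insert 0 ((\<lambda>d'. - (c \<bullet> d') / (d \<bullet> d')) ` D)"
    using ex_new_if_finite[OF infinite_UNIV_char_0] by blast
  show ?case
  proof (cases "c \<bullet> d = 0")
    case False
    with c show ?thesis by auto
  next
    case True
    have "(c + t *\<^sub>R d) \<bullet> d' \<noteq> 0" if "d' \<in> D" for d'
    proof
      assume "(c + t *\<^sub>R d) \<bullet> d' = 0"
      then have "c \<bullet> d' + t * (d \<bullet> d') = 0" by (simp add: inner_add_left)
      moreover have "d \<bullet> d' \<noteq> 0 \<Longrightarrow> t \<noteq> - (c \<bullet> d') / (d \<bullet> d')" using t that by auto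
      ultimately show False using c that by (cases "d \<bullet> d' = 0") (auto simp: field_simps)
    qed
    moreover have "(c + t *\<^sub>R d) \<bullet> d \<noteq> 0" using True t insert.prems by (simp add: inner_add_left)
    ultimately show ?thesis by blast
  qed
qed simp

lemma exists_unit_vector_inj_on_inner:
  fixes X :: "'a::euclidean_space set"
  assumes "finite X"
  shows "\<exists>c. norm c = 1 \<and> inj_on (\<lambda>p. c \<bullet> p) X"
proof -
  obtain b :: 'a where b: "b \<in> Basis" using nonempty_Basis by blast
  define D where "D = insert b ((\<lambda>(p, q). p - q) ` (X \<times> X - Id))"
  have "finite D" using assms by (simp add: D_def)
  moreover have "0 \<notin> D" using b nonzero_Basis by (auto simp: D_def)
  ultimately obtain c where c: "\<forall>d\<in>D. c \<bullet> d \<noteq> 0" using exists_inner_nonzero_finite by blast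
  then have "c \<noteq> 0" by (auto simp: D_def)
  have "inj_on (\<lambda>p. c \<bullet> p) X"
  proof (rule inj_onI, rule ccontr)
    fix p q assume "p \<in> X" "q \<in> X" "c \<bullet> p = c \<bullet> q" "p \<noteq> q"
    then have "p - q \<in> D" unfolding D_def by force
    moreover have "c \<bullet> (p - q) = 0" using \<open>c \<bullet> p = c \<bullet> q\<close> by (simp add: inner_diff_right)
    ultimately show False using c by blast
  qed
  then have "inj_on (\<lambda>p. (c /\<^sub>R norm c) \<bullet> p) X"
    using \<open>c \<noteq> 0\<close> by (auto simp: inj_on_def)
  moreover have "norm (c /\<^sub>R norm c) = 1" using \<open>c \<noteq> 0\<close> by simp
  ultimately show ?thesis by blast
qed

lemma exists_unit_vector_orthogonal:
  fixes c :: "real ^ 'n"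
  assumes "CARD('n) \<ge> 2"
  shows "\<exists>e. norm e = 1 \<and> c \<bullet> e = 0"
proof -
  obtain i j :: 'n where "i \<noteq> j"
    using assms card_le_Suc0_iff_eq[of "UNIV :: 'n set"] by fastforce
  define e where "e = c $ j *\<^sub>R axis i (1::real) - c $ i *\<^sub>R axis j 1"
  have "c \<bullet> e = 0" by (simp add: e_def inner_diff_right inner_axis)
  show ?thesis
  proof (cases "e = 0")
    case False
    with \<open>c \<bullet> e = 0\<close> show ?thesis by (intro exI[of _ "e /\<^sub>R norm e"]) simp
  next
    case True
    then have "e $ j = 0" by simp
    then have "c $ i = 0" using \<open>i \<noteq> j\<close> by (simp add: e_def axis_def)
    then show ?thesis by (intro exI[of _ "axis i 1"]) (simp add: inner_axis)
  qed
qed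

theorem corollary1:
  fixes X :: "(real ^ 'n) set"
  assumes "CARD('n) \<ge> 2" and "finite X"
  shows "\<exists>g :: real ^ 'n \<Rightarrow> real ^ 'n. poly_vector_field g \<and>
           (\<forall>p\<in>X. asymptotically_stable_equilibrium g p) \<and>
           (\<forall>x. g x = 0 \<longrightarrow> x \<in> X)"
proof -
  obtain c :: "real ^ 'n" where c: "norm c = 1" "inj_on (\<lambda>p. c \<bullet> p) X"
    using exists_unit_vector_inj_on_inner[OF assms(2)] by blast
  obtain e :: "real ^ 'n" where e: "norm e = 1" "c \<bullet> e = 0"
    using exists_unit_vector_orthogonal[OF assms(1)] by blast
  interpret sink_field_construction X c e
    by unfold_locales (use assms(2) c e in auto)
  have "asymptotically_stable_equilibrium g p" if p: "p \<in> X" for p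
  proof -
    obtain r where "lyapunov_function g p (V p) (DV p) r"
      using lyapunov_function_node[OF p] by blast
    then show ?thesis by (rule lyapunov_function.asymptotically_stable_equilibrium)
  qed
  then show ?thesis using poly_vector_field_g g_eq_zero_imp_mem by blast
qed

end
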